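(* Let $T=\{t_1,\ldots,t_N\}$ be documents, each containing at most $L$ distinct words from a dictionary $\{w_1,\ldots,w_D\}$ ($D\ge2$). For a word $w$ let $\#(w)$ be the number of documents containing $w$. Fix $\epsilon\in(0,1]$ and $p=2\log D$. Consider the mapper that, for every document $t$ and every unordered pair of distinct words $(w_1,w_2)$ in $t$, independently emits $((w_1,w_2)\to1)$ with probability $\min\!\left(1,\frac{p}{\epsilon}\frac{2}{\#(w_1)+\#(w_2)}\right)$ (DiceSampleEmit). Then the expected total number of emitted pairs (shuffle size) is $O(DL\log(D)/\epsilon)$, independently of $N$.
   Context: This sampling scheme is used to estimate the Dice similarity $\frac{2\#(x,y)}{\#(x)+\#(y)}$, where $\#(x,y)$ is the number of documents containing both $x$ and $y$. $\log$ denotes the natural logarithm. *)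

theory Defs
  imports "HOL-Probability.Probability"
begin

text \<open>Words are natural numbers; the dictionary is {0..<D}. A corpus of N documents is
  an indexed family T :: nat => nat set, document i (for i < N) being the set of distinct
  words it contains.\<close>

definition doc_count :: "(nat \<Rightarrow> nat set) \<Rightarrow> nat \<Rightarrow> nat \<Rightarrow> nat" where
  "doc_count T N w = card {i. i < N \<and> w \<in> T i}"

definition dice_p :: "nat \<Rightarrow> real" where
  "dice_p D = 2 * ln (real D)"

definition emit_slots :: "(nat \<Rightarrow> nat set) \<Rightarrow> nat \<Rightarrow> (nat \<times> nat set) set" where
  "emit_slots T N = {(i, {u, v}) | i u v. i < N \<and> u \<in> T i \<and> v \<in> T i \<and> u \<noteq> v}"

definition dice_emit_prob :: "nat \<Rightarrow> real \<Rightarrow> (nat \<Rightarrow> nat set) \<Rightarrow> nat \<Rightarrow> nat set \<Rightarrow> real" where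
  "dice_emit_prob D \<epsilon> T N e =
     min 1 ((dice_p D / \<epsilon>) * (2 / (\<Sum>w\<in>e. real (doc_count T N w))))"

definition dice_emissions :: "nat \<Rightarrow> real \<Rightarrow> (nat \<Rightarrow> nat set) \<Rightarrow> nat \<Rightarrow> (nat \<times> nat set \<Rightarrow> bool) pmf" where
  "dice_emissions D \<epsilon> T N =
     Pi_pmf (emit_slots T N) False (\<lambda>(i, e). bernoulli_pmf (dice_emit_prob D \<epsilon> T N e))"

definition dice_shuffle_size :: "nat \<Rightarrow> real \<Rightarrow> (nat \<Rightarrow> nat set) \<Rightarrow> nat \<Rightarrow> real" where
  "dice_shuffle_size D \<epsilon> T N =
     measure_pmf.expectation (dice_emissions D \<epsilon> T N)
       (\<lambda>f. real (card {s \<in> emit_slots T N. f s}))"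

end

theory Submission imports Defs begin

text \<open>The expected shuffle size is the sum of the emission probabilities over all slots.
  Bound the probability of a pair \<open>{u, v}\<close> by \<open>min 1 (c / #(u))\<close> with \<open>c = 4 log D / \<epsilon>\<close>,
  i.e. charge it to one of its words. Each word \<open>u\<close> occurs in \<open>#(u)\<close> documents and is
  paired there with at most \<open>L\<close> other words, so it is charged at most
  \<open>L \<cdot> #(u) \<cdot> min 1 (c / #(u)) \<le> L c\<close>; summing over the \<open>D\<close> words gives \<open>4 D L log D / \<epsilon>\<close>,
  whatever the number of documents.\<close>

lemma expectation_card_Pi_pmf_bernoulli:
  assumes "finite A" and "\<And>x. x \<in> A \<Longrightarrow> 0 \<le> q x \<and> q x \<le> 1"
  shows "measure_pmf.expectation (Pi_pmf A False (\<lambda>x. bernoulli_pmf (q x)))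
           (\<lambda>f. real (card {s \<in> A. f s})) = sum q A"
proof -
  let ?P = "Pi_pmf A False (\<lambda>x. bernoulli_pmf (q x))"
  have card_eq: "real (card {s \<in> A. f s}) = (\<Sum>s\<in>A. of_bool (f s))" for f
    using assms(1) by (simp add: of_bool_def sum.If_cases Int_def conj_commute)
  have integrable: "integrable (measure_pmf ?P) (\<lambda>f. of_bool (f s) :: real)" for s
    by (rule measure_pmf.integrable_const_bound[where B=1]) auto
  have component: "measure_pmf.expectation ?P (\<lambda>f. of_bool (f s) :: real) = q s" if "s \<in> A" for s
  proof -
    have "measure_pmf.expectation ?P (\<lambda>f. of_bool (f s))
        = measure_pmf.expectation (map_pmf (\<lambda>f. f s) ?P) (\<lambda>b. of_bool b :: real)"
      by simp
    also have "\<dots> = measure_pmf.expectation (bernoulli_pmf (q s)) (\<lambda>b. of_bool b)"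
      using Pi_pmf_component[OF assms(1), of s False] that by simp
    also have "\<dots> = q s"
      using assms(2)[OF that] by (simp add: integral_measure_pmf[of "{True, False}"])
    finally show ?thesis .
  qed
  show ?thesis
    unfolding card_eq by (subst Bochner_Integration.integral_sum) (use integrable component in auto)
qed

lemma dice_p_nonneg: "0 \<le> dice_p D"
  by (cases "D = 0") (simp_all add: dice_p_def)

lemma dice_emit_prob_nonneg: "0 \<le> \<epsilon> \<Longrightarrow> 0 \<le> dice_emit_prob D \<epsilon> T N e"
  unfolding dice_emit_prob_def using dice_p_nonneg[of D] by (simp add: sum_nonneg)

lemma dice_emit_prob_le_1: "dice_emit_prob D \<epsilon> T N e \<le> 1"
  by (simp add: dice_emit_prob_def)

lemma emit_slots_eq_image:
  "emit_slots T N = (\<lambda>(i, u, v). (i, {u, v})) ` (SIGMA i:{..<N}. SIGMA u:T i. T i - {u})"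
  unfolding emit_slots_def by force

lemma dice_shuffle_size_eq_sum:
  assumes "\<And>i. i < N \<Longrightarrow> finite (T i)" and "0 \<le> \<epsilon>"
  shows "dice_shuffle_size D \<epsilon> T N = (\<Sum>(i, e)\<in>emit_slots T N. dice_emit_prob D \<epsilon> T N e)"
proof -
  let ?q = "\<lambda>(i, e). dice_emit_prob D \<epsilon> T N e"
  have finite: "finite (emit_slots T N)"
    unfolding emit_slots_eq_image using assms(1) by (auto intro!: finite_SigmaI)
  have emissions: "dice_emissions D \<epsilon> T N = Pi_pmf (emit_slots T N) False (\<lambda>s. bernoulli_pmf (?q s))"
    unfolding dice_emissions_def by (intro Pi_pmf_cong) auto
  show ?thesis
    unfolding dice_shuffle_size_def emissions
    by (rule expectation_card_Pi_pmf_bernoulli[OF finite])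
       (auto simp: dice_emit_prob_nonneg[OF assms(2)] dice_emit_prob_le_1)
qed

lemma doc_count_pos:
  assumes "i < N" and "u \<in> T i"
  shows "0 < doc_count T N u"
  unfolding doc_count_def using assms by (auto simp: card_gt_0_iff)

lemma dice_emit_prob_le_charge:
  assumes "0 \<le> \<epsilon>" and "i < N" and "u \<in> T i" and "u \<noteq> v"
  shows "dice_emit_prob D \<epsilon> T N {u, v} \<le> min 1 (2 * dice_p D / \<epsilon> / real (doc_count T N u))"
proof -
  let ?c = "2 * dice_p D / \<epsilon>"
  have "0 \<le> ?c"
    using assms(1) dice_p_nonneg[of D] by simp
  moreover have "0 < real (doc_count T N u)"
    using doc_count_pos[of i N u T] assms(2,3) by simp
  ultimately have "?c / (real (doc_count T N u) + real (doc_count T N v)) \<le> ?c / real (doc_count T N u)"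
    by (intro divide_left_mono) auto
  moreover have "dice_emit_prob D \<epsilon> T N {u, v}
      = min 1 (?c / (real (doc_count T N u) + real (doc_count T N v)))"
    unfolding dice_emit_prob_def using assms(4) by (simp add: mult.commute)
  ultimately show ?thesis
    by (simp only: min.mono[OF order.refl])
qed

lemma mult_min_one_divide_le:
  fixes x c :: real
  assumes "0 \<le> x" and "0 \<le> c"
  shows "x * min 1 (c / x) \<le> c"
proof (cases "x = 0")
  case False
  then have "x * min 1 (c / x) \<le> x * (c / x)"
    using assms by (intro mult_left_mono) auto
  with False show ?thesis by simp
qed (use assms in simp)

lemma sum_emit_slots_le_sum_ordered_pairs:
  fixes f :: "nat set \<Rightarrow> real"
  assumes "\<And>i. i < N \<Longrightarrow> finite (T i)" and "\<And>e. 0 \<le> f e"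
  shows "(\<Sum>(i, e)\<in>emit_slots T N. f e) \<le> (\<Sum>i<N. \<Sum>u\<in>T i. \<Sum>v\<in>T i - {u}. f {u, v})"
proof -
  let ?Pairs = "SIGMA i:{..<N}. SIGMA u:T i. T i - {u}"
  have "(\<Sum>(i, e)\<in>emit_slots T N. f e)
      \<le> (\<Sum>p\<in>?Pairs. ((\<lambda>(i, e). f e) \<circ> (\<lambda>(i, u, v). (i, {u, v}))) p)"
    unfolding emit_slots_eq_image
    by (rule sum_image_le) (use assms in \<open>auto intro!: finite_SigmaI\<close>)
  also have "\<dots> = (\<Sum>(i, u, v)\<in>?Pairs. f {u, v})"
    by (simp add: split_def comp_def)
  also have "\<dots> = (\<Sum>i<N. \<Sum>(u, v)\<in>(SIGMA u:T i. T i - {u}). f {u, v})"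
    using assms(1) by (subst sum.Sigma) (auto simp: split_def)
  also have "\<dots> = (\<Sum>i<N. \<Sum>u\<in>T i. \<Sum>v\<in>T i - {u}. f {u, v})"
    using assms(1) by (intro sum.cong refl, subst sum.Sigma) (auto simp: split_def)
  finally show ?thesis .
qed

lemma sum_docs_sum_words_eq:
  assumes "\<And>i. i < N \<Longrightarrow> T i \<subseteq> {..<D}"
  shows "(\<Sum>i<N. \<Sum>u\<in>T i. h u) = (\<Sum>u<D. real (doc_count T N u) * h u)"
proof -
  have "(\<Sum>u<D. if u \<in> T i then h u else 0) = (\<Sum>u\<in>T i. h u)" if "i < N" for i
    by (simp only: sum.inter_restrict[OF finite_lessThan, symmetric] Int_absorb1[OF assms[OF that]])
  then have "(\<Sum>i<N. \<Sum>u\<in>T i. h u) = (\<Sum>i<N. \<Sum>u<D. if u \<in> T i then h u else 0)"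
    by simp
  also have "\<dots> = (\<Sum>u<D. \<Sum>i<N. if u \<in> T i then h u else 0)"
    by (rule sum.swap)
  also have "\<dots> = (\<Sum>u<D. real (doc_count T N u) * h u)"
    by (intro sum.cong refl)
       (simp add: sum.If_cases doc_count_def Int_def conj_commute)
  finally show ?thesis .
qed

lemma dice_shuffle_size_le:
  assumes docs: "\<And>i. i < N \<Longrightarrow> T i \<subseteq> {..<D} \<and> card (T i) \<le> L" and "0 < \<epsilon>"
  shows "dice_shuffle_size D \<epsilon> T N \<le> 4 * real D * real L * ln (real D) / \<epsilon>"
proof -
  define c where "c = 2 * dice_p D / \<epsilon>"
  define g where "g u = min 1 (c / real (doc_count T N u))" for u
  let ?q = "dice_emit_prob D \<epsilon> T N"
  have "0 \<le> c"
    using assms(2) dice_p_nonneg[of D] by (simp add: c_def)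
  have finite: "finite (T i)" if "i < N" for i
    using docs[OF that] finite_subset by blast
  have charge: "(\<Sum>v\<in>T i - {u}. ?q {u, v}) \<le> real L * g u" if "i < N" and "u \<in> T i" for i u
  proof -
    have "(\<Sum>v\<in>T i - {u}. ?q {u, v}) \<le> (\<Sum>v\<in>T i - {u}. g u)"
    proof (rule sum_mono)
      fix v assume "v \<in> T i - {u}"
      then show "?q {u, v} \<le> g u"
        unfolding g_def c_def using that assms(2) by (intro dice_emit_prob_le_charge) auto
    qed
    also have "\<dots> = real (card (T i - {u})) * g u"
      by simp
    also have "\<dots> \<le> real L * g u"
      using card_Diff1_le[of "T i" u] docs[OF that(1)] \<open>0 \<le> c\<close>
      by (intro mult_right_mono) (auto simp: g_def)
    finally show ?thesis .
  qed
  have "dice_shuffle_size D \<epsilon> T N = (\<Sum>(i, e)\<in>emit_slots T N. ?q e)"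
    using finite assms(2) by (simp add: dice_shuffle_size_eq_sum)
  also have "\<dots> \<le> (\<Sum>i<N. \<Sum>u\<in>T i. \<Sum>v\<in>T i - {u}. ?q {u, v})"
    using finite assms(2) by (intro sum_emit_slots_le_sum_ordered_pairs dice_emit_prob_nonneg) auto
  also have "\<dots> \<le> (\<Sum>i<N. \<Sum>u\<in>T i. real L * g u)"
    using charge by (intro sum_mono) auto
  also have "\<dots> = real L * (\<Sum>u<D. real (doc_count T N u) * g u)"
    using docs by (simp add: sum_docs_sum_words_eq sum_distrib_left[symmetric] mult.left_commute)
  also have "\<dots> \<le> real L * (\<Sum>u<D. c)"
    unfolding g_def using \<open>0 \<le> c\<close> by (intro mult_left_mono sum_mono mult_min_one_divide_le) auto
  also have "\<dots> = 4 * real D * real L * ln (real D) / \<epsilon>"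
    by (simp add: c_def dice_p_def)
  finally show ?thesis .
qed

theorem theorem9:
  shows "\<exists>C>0. \<forall>(D::nat) (L::nat) (N::nat) (T::nat \<Rightarrow> nat set) (\<epsilon>::real).
     D \<ge> 2 \<longrightarrow> (\<forall>i<N. T i \<subseteq> {..<D} \<and> card (T i) \<le> L) \<longrightarrow>
     0 < \<epsilon> \<longrightarrow> \<epsilon> \<le> 1 \<longrightarrow>
     dice_shuffle_size D \<epsilon> T N \<le> C * real D * real L * ln (real D) / \<epsilon>"
  \<comment> \<open>\<open>C = 4\<close> works.\<close>
  by (rule exI[of _ 4]) (auto intro: dice_shuffle_size_le)

end
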